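(* Let $\varepsilon>0$. Let $x\geqslant y\geqslant2$ with $\psi(y)>2\log x$, and let $q\geqslant1$ satisfy $P^+(q)\leqslant y$ and $\omega(q)\ll y^{1/2-(1+\varepsilon)(\log_2u)/\log u}$. Then $$D_q\ll\frac{\sqrt u}{(\log 2u)^{1/2+\varepsilon}}.$$
   Context: For a prime $p$, $\nu_p:=\lfloor\log y/\log p\rfloor$, $\psi(y):=\sum_{p\leqslant y}\nu_p\log p$, $u:=\log x/\log y$, $\log_2=\log\log$. $P^+(q)$ is the largest prime factor of $q$, $\omega(q)$ the number of its distinct prime factors. Let $p_k$ be the $k$-th prime, $p_0:=2$, $z_q:=p_{\omega(q)}$, $\vartheta_q:=\log z_q/\log y$, $\eta:=\psi(y)/\log x-2$, $$\Delta_q:=\begin{cases}\dfrac{(\log x)^{\vartheta_q}}{\log y}\Big(1+\dfrac1{\vartheta_q\log(1+\eta)}\Big)&\text{if }2\log x<\psi(y)\text{ and }y\leqslant(\log x)^2,\\[2mm] \dfrac{\vartheta_q\{u\log 2u\}^{\vartheta_q}}{1+\vartheta_q\log 2u}&\text{if }y>(\log x)^2,\end{cases}$$ and $D_q:=\min\{\omega(q),\Delta_q\}$. *)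

theory Defs
  imports Complex_Main "HOL-Computational_Algebra.Primes"
begin

definition nu :: "real \<Rightarrow> nat \<Rightarrow> int" where
  "nu y p = \<lfloor>ln y / ln (real p)\<rfloor>"

definition psi :: "real \<Rightarrow> real" where
  "psi y = (\<Sum>p\<in>{p::nat. prime p \<and> real p \<le> y}. real_of_int (nu y p) * ln (real p))"

definition u_of :: "real \<Rightarrow> real \<Rightarrow> real" where
  "u_of x y = ln x / ln y"

definition omega :: "nat \<Rightarrow> nat" where
  "omega q = card (prime_factors q)"

text \<open>k-th prime: p_1 = 2, p_2 = 3, ...; convention p_0 = 2.\<close>
definition kth_prime :: "nat \<Rightarrow> nat" where
  "kth_prime k = (if k = 0 then 2
     else (LEAST p. prime p \<and> card {r::nat. prime r \<and> r \<le> p} = k))"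

definition z_q :: "nat \<Rightarrow> nat" where
  "z_q q = kth_prime (omega q)"

definition theta_q :: "real \<Rightarrow> nat \<Rightarrow> real" where
  "theta_q y q = ln (real (z_q q)) / ln y"

definition eta :: "real \<Rightarrow> real \<Rightarrow> real" where
  "eta x y = psi y / ln x - 2"

text \<open>Delta_q; the first case applies when 2 log x < psi(y) and y <= (log x)^2,
  the second when y > (log x)^2. Outside these ranges the value is irrelevant
  (the theorem assumes psi(y) > 2 log x) and we set it to 0.\<close>
definition Delta :: "real \<Rightarrow> real \<Rightarrow> nat \<Rightarrow> real" where
  "Delta x y q =
    (let th = theta_q y q; u = u_of x y in
     if 2 * ln x < psi y \<and> y \<le> (ln x)^2 then
       (ln x) powr th / ln y * (1 + 1 / (th * ln (1 + eta x y)))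
     else if y > (ln x)^2 then
       th * (u * ln (2 * u)) powr th / (1 + th * ln (2 * u))
     else 0)"

definition D :: "real \<Rightarrow> real \<Rightarrow> nat \<Rightarrow> real" where
  "D x y q = min (real (omega q)) (Delta x y q)"

end

theory Submission
  imports Defs
begin

(* D_q = min(omega q, Delta_q), so it suffices to bound either term.  When u is bounded, both
   are: omega q <= y <= 256 u^4 if y <= (log x)^2, and Delta_q <= 2 + 2 u^2 otherwise.
   For large u, either omega q is already below the target bound, or log omega q >= (log u)/4.
   In the latter case theta_q log y = log z_q >= log omega q is large, while Chebyshev's bound
   psi(y) >= y/8 gives z_q <= 10 omega q log y, so that the hypothesis on omega q yields
   theta_q <= 1/2 - (1 + eps) log_2 u / log u + O(log_2 y / log y).  These two estimates bound
   Delta_q when y > (log x)^2, and also when y <= (log x)^2 and psi(y) >= 5 log x (then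
   eta >= 3).  In the remaining case psi(y) < 5 log x, Chebyshev forces y <= 40 u log y, and
   the hypothesis bounds omega q directly. *)

section \<open>Chebyshev's lower bound for psi\<close>

lemma multiplicity_eq_card_prime_power_dvd:
  fixes p m N :: nat
  assumes p: "prime p" and m: "0 < m" "m \<le> N"
  shows "multiplicity p m = card {i\<in>{1..N}. p ^ i dvd m}"
proof -
  have "multiplicity p m < p ^ multiplicity p m"
    using prime_gt_1_nat[OF p] by (intro power_gt_expt) simp
  also have "p ^ multiplicity p m \<le> m"
    using m by (intro dvd_imp_le multiplicity_dvd) auto
  finally have "multiplicity p m \<le> N" using m by linarith
  moreover have "p ^ i dvd m \<longleftrightarrow> i \<le> multiplicity p m" for i
    using m p by (intro power_dvd_iff_le_multiplicity) auto
  ultimately have "{i\<in>{1..N}. p ^ i dvd m} = {1..multiplicity p m}"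
    by (intro set_eqI) (metis (no_types, lifting) atLeastAtMost_iff le_trans mem_Collect_eq)
  then show ?thesis by simp
qed

lemma multiplicity_fact:
  fixes p n N :: nat
  assumes p: "prime p" and "n \<le> N"
  shows "multiplicity p (fact n) = (\<Sum>i=1..N. n div p ^ i)"
  using \<open>n \<le> N\<close>
proof (induction n)
  case 0
  then show ?case by simp
next
  case (Suc n)
  have "multiplicity p (fact (Suc n) :: nat) = multiplicity p (Suc n) + multiplicity p (fact n :: nat)"
    unfolding fact_Suc of_nat_id using p by (intro prime_elem_multiplicity_mult_distrib) auto
  also have "\<dots> = (\<Sum>i=1..N. if p ^ i dvd Suc n then 1 else 0) + (\<Sum>i=1..N. n div p ^ i)"
    using Suc multiplicity_eq_card_prime_power_dvd[OF p, of "Suc n" N]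
    by (simp add: sum.inter_filter[symmetric])
  also have "\<dots> = (\<Sum>i=1..N. Suc n div p ^ i)"
    unfolding sum.distrib[symmetric]
    using p by (intro sum.cong) (auto simp: div_Suc dvd_eq_mod_eq_0 prime_gt_0_nat)
  finally show ?case .
qed

lemma double_div_bounds:
  fixes n d :: nat
  assumes "0 < d"
  shows "2 * (n div d) \<le> 2 * n div d" and "2 * n div d \<le> 2 * (n div d) + 1"
proof -
  have "2 * n div d = 2 * (n div d) + 2 * (n mod d) div d"
    by (rule div_mult1_eq)
  moreover have "2 * (n mod d) < 2 * d" using assms by simp
  then have "2 * (n mod d) div d < 2" by (rule less_mult_imp_div_less)
  ultimately show "2 * (n div d) \<le> 2 * n div d" "2 * n div d \<le> 2 * (n div d) + 1" by simp_all
qed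

(* By Legendre's formula the multiplicity is a sum of terms floor(2n/p^i) - 2 floor(n/p^i),
   each 0 or 1, which vanish once p^i > 2n. *)
lemma prime_power_multiplicity_central_binomial_le:
  fixes p n :: nat
  assumes p: "prime p" and n: "1 \<le> n"
  shows "p ^ multiplicity p ((2*n) choose n) \<le> 2*n"
proof (rule ccontr)
  define m where "m = multiplicity p ((2*n) choose n)"
  define t where "t i = 2*n div p ^ i - 2 * (n div p ^ i)" for i
  assume "\<not> p ^ multiplicity p ((2*n) choose n) \<le> 2*n"
  then have big: "2*n < p ^ m" unfolding m_def by simp
  have pos: "0 < p ^ i" for i using p by (simp add: prime_gt_0_nat)
  have "fact (2*n) = fact n * fact n * ((2*n) choose n)"
    using binomial_fact_lemma[of n "2*n"] by (simp add: algebra_simps)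
  then have "multiplicity p (fact (2*n) :: nat) = 2 * multiplicity p (fact n :: nat) + m"
    using p by (simp add: m_def prime_elem_multiplicity_mult_distrib)
  then have "(\<Sum>i=1..2*n. 2*n div p ^ i) = (\<Sum>i=1..2*n. 2 * (n div p ^ i)) + m"
    using multiplicity_fact[OF p, of n "2*n"] multiplicity_fact[OF p, of "2*n" "2*n"]
    by (simp add: sum_distrib_left)
  then have "m = (\<Sum>i=1..2*n. t i)"
    unfolding t_def using double_div_bounds(1)[OF pos] by (simp add: sum_subtractf_nat)
  also have "\<dots> = (\<Sum>i\<in>{1..2*n} \<inter> {..<m}. t i)"
  proof (intro sum.mono_neutral_right ballI)
    fix i assume "i \<in> {1..2*n} - {1..2*n} \<inter> {..<m}"
    then have "p ^ m \<le> p ^ i" using prime_ge_1_nat[OF p] by (intro power_increasing) auto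
    then show "t i = 0" unfolding t_def using big by simp
  qed auto
  also have "\<dots> \<le> card ({1..2*n} \<inter> {..<m})"
  proof -
    have "t i \<le> 1" for i using double_div_bounds(2)[OF pos, of n i] unfolding t_def by linarith
    then show ?thesis using sum_bounded_above[of _ t 1] by simp
  qed
  also have "\<dots> \<le> card {1..<m}" by (intro card_mono) auto
  also have "\<dots> < m" using big n by (cases m) auto
  finally show False by simp
qed

definition prime_pi :: "nat \<Rightarrow> nat" where
  "prime_pi n = card {p. prime p \<and> p \<le> n}"

lemma prime_pi_le: "prime_pi n \<le> n"
proof -
  have "{p. prime p \<and> p \<le> n} \<subseteq> {1..n}" using prime_ge_1_nat by auto
  then have "prime_pi n \<le> card {1..n}" unfolding prime_pi_def by (intro card_mono) auto
  then show ?thesis by simp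
qed

lemma prime_pi_0 [simp]: "prime_pi 0 = 0"
proof -
  have "{p::nat. prime p \<and> p \<le> 0} = {}" by auto
  then show ?thesis unfolding prime_pi_def by (metis card.empty)
qed

lemma prime_pi_Suc: "prime_pi (Suc n) = prime_pi n + (if prime (Suc n) then 1 else 0)"
proof -
  have "{p. prime p \<and> p \<le> Suc n} =
      (if prime (Suc n) then insert (Suc n) {p. prime p \<and> p \<le> n} else {p. prime p \<and> p \<le> n})"
    by (auto simp: le_Suc_eq)
  then show ?thesis by (simp add: prime_pi_def)
qed

lemma primes_le_real_eq: "{p::nat. prime p \<and> real p \<le> y} = {p. prime p \<and> p \<le> nat \<lfloor>y\<rfloor>}"
  by (metis le_nat_floor le_zero_eq linorder_le_cases nat_floor_neg
      not_prime_0 of_nat_floor of_nat_mono order_trans)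

lemma finite_primes_le_real [simp]: "finite {p::nat. prime p \<and> real p \<le> y}"
  unfolding primes_le_real_eq by simp

lemma nu_nonneg: "prime p \<Longrightarrow> real p \<le> y \<Longrightarrow> 0 \<le> nu y p"
  unfolding nu_def using prime_ge_2_nat[of p] by simp

lemma nu_mult_ln_le: "prime p \<Longrightarrow> real_of_int (nu y p) * ln (real p) \<le> ln y"
  unfolding nu_def using prime_ge_2_nat[of p]
  by (metis floor_divide_lower ln_gt_zero of_nat_1 of_nat_less_iff prime_gt_1_nat)

lemma psi_le_prime_pi_mult_ln: "psi y \<le> real (prime_pi (nat \<lfloor>y\<rfloor>)) * ln y"
proof -
  have "psi y \<le> (\<Sum>p\<in>{p::nat. prime p \<and> real p \<le> y}. ln y)"
    unfolding psi_def by (intro sum_mono nu_mult_ln_le) auto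
  then show ?thesis by (simp add: prime_pi_def primes_le_real_eq)
qed

lemma psi_le_mult_ln:
  assumes "1 \<le> y"
  shows "psi y \<le> y * ln y"
proof -
  have "real (prime_pi (nat \<lfloor>y\<rfloor>)) \<le> y"
    using prime_pi_le[of "nat \<lfloor>y\<rfloor>"] assms by linarith
  then show ?thesis
    using psi_le_prime_pi_mult_ln[of y] assms by (meson ln_ge_zero mult_right_mono order_trans)
qed

lemma ln_eq_sum_multiplicity:
  fixes m :: nat
  assumes "0 < m"
  shows "ln (real m) = (\<Sum>p\<in>prime_factors m. real (multiplicity p m) * ln (real p))"
proof -
  have "m = (\<Prod>p\<in>prime_factors m. p ^ multiplicity p m)"
    by (rule prime_factorization_nat[OF assms])
  then have "real m = real (\<Prod>p\<in>prime_factors m. p ^ multiplicity p m)"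
    by (rule arg_cong)
  also have "\<dots> = (\<Prod>p\<in>prime_factors m. real p ^ multiplicity p m)"
    by (simp only: of_nat_prod of_nat_power)
  finally have "ln (real m) = ln (\<Prod>p\<in>prime_factors m. real p ^ multiplicity p m)"
    by simp
  have pos: "0 < real p" if "p \<in> prime_factors m" for p
    using that by (simp add: prime_factors_multiplicity prime_gt_0_nat)
  have "ln (real m) = (\<Sum>p\<in>prime_factors m. ln (real p ^ multiplicity p m))"
    unfolding \<open>ln (real m) = _\<close> using pos by (intro ln_prod) auto
  also have "\<dots> = (\<Sum>p\<in>prime_factors m. real (multiplicity p m) * ln (real p))"
    using pos by (intro sum.cong) (auto simp: ln_realpow)
  finally show ?thesis .
qed

(* psi y is the logarithm of lcm {1..y}, which m divides. *)
lemma ln_le_psi: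
  fixes m :: nat
  assumes "0 < m" and le: "\<forall>p\<in>prime_factors m. real (p ^ multiplicity p m) \<le> y"
  shows "ln (real m) \<le> psi y"
proof -
  have factor_le: "real p \<le> y" if "p \<in> prime_factors m" for p
  proof -
    have "p ^ 1 \<le> p ^ multiplicity p m"
      using that prime_ge_1_nat[of p]
      by (intro power_increasing) (auto simp: prime_factors_multiplicity Suc_le_eq)
    then show ?thesis using le that by (metis of_nat_le_iff order_trans power_one_right)
  qed
  have "ln (real m) \<le> (\<Sum>p\<in>prime_factors m. real_of_int (nu y p) * ln (real p))"
    unfolding ln_eq_sum_multiplicity[OF assms(1)]
  proof (intro sum_mono)
    fix p assume p: "p \<in> prime_factors m"
    then have "prime p" by (rule in_prime_factors_imp_prime)
    then have lnp: "0 < ln (real p)" using prime_gt_1_nat[of p] by simp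
    have "ln (real p ^ multiplicity p m) \<le> ln y"
      using le p prime_gt_0_nat[OF \<open>prime p\<close>] by (intro ln_mono) auto
    then have "real (multiplicity p m) * ln (real p) \<le> ln y"
      using prime_gt_0_nat[OF \<open>prime p\<close>] by (simp add: ln_realpow)
    then have "int (multiplicity p m) \<le> nu y p"
      unfolding nu_def using lnp by (simp add: le_floor_iff pos_le_divide_eq)
    then show "real (multiplicity p m) * ln (real p) \<le> real_of_int (nu y p) * ln (real p)"
      using lnp by (intro mult_right_mono) linarith+
  qed
  also have "\<dots> \<le> psi y"
    unfolding psi_def
  proof (rule sum_mono2)
    show "prime_factors m \<subseteq> {p. prime p \<and> real p \<le> y}"
      using factor_le in_prime_factors_imp_prime by blast
    fix p assume "p \<in> {p. prime p \<and> real p \<le> y} - prime_factors m"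
    then have "prime p" "real p \<le> y" by auto
    then show "0 \<le> real_of_int (nu y p) * ln (real p)"
      using nu_nonneg prime_ge_1_nat by (intro mult_nonneg_nonneg) auto
  qed simp
  finally show ?thesis .
qed

lemma two_mult_le_two_power: "1 \<le> n \<Longrightarrow> 2 * n \<le> (2::nat) ^ n"
  by (induction n rule: dec_induct) auto

lemma ln_two_ge_half: "1/2 \<le> ln (2::real)"
  using ln_le_minus_one[of "1/2::real"] by (simp add: ln_div)

lemma psi_lower_bound:
  assumes "4 \<le> y"
  shows "y / 8 \<le> psi y"
proof -
  define n where "n = nat \<lfloor>y/2\<rfloor>"
  have n: "2 \<le> n" "real (2*n) \<le> y" "y < 2 * real n + 2"
    unfolding n_def using assms by linarith+
  have "real n / 2 \<le> real n * ln 2" using mult_left_mono[OF ln_two_ge_half, of "real n"] by simp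
  also have "\<dots> = ln (2 ^ n)" by (simp add: ln_realpow)
  also have "\<dots> \<le> ln (4 ^ n / (2 * real n))"
  proof (intro ln_mono)
    have "2 * n \<le> 2 ^ n" using n(1) by (intro two_mult_le_two_power) simp
    then have "2 * real n \<le> 2 ^ n" by (metis of_nat_le_iff of_nat_mult of_nat_numeral of_nat_power)
    then have "2 ^ n * (2 * real n) \<le> 2 ^ n * 2 ^ n" by (rule mult_left_mono) simp
    also have "\<dots> = 4 ^ n" by (simp flip: power_mult_distrib)
    finally have "2 ^ n * (2 * real n) \<le> 4 ^ n" .
    moreover have "0 < 2 * real n" using n(1) by simp
    ultimately show "2 ^ n \<le> 4 ^ n / (2 * real n)" by (simp add: pos_le_divide_eq)
  qed simp
  also have "\<dots> \<le> ln (real ((2*n) choose n))"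
    using central_binomial_lower_bound[of n] n by (intro ln_mono) auto
  also have "\<dots> \<le> psi y"
  proof (intro ln_le_psi ballI)
    fix p assume "p \<in> prime_factors ((2*n) choose n)"
    then have "p ^ multiplicity p ((2*n) choose n) \<le> 2*n"
      using n by (intro prime_power_multiplicity_central_binomial_le) auto
    then have "real (p ^ multiplicity p ((2*n) choose n)) \<le> real (2*n)" by (rule of_nat_mono)
    then show "real (p ^ multiplicity p ((2*n) choose n)) \<le> y" using n(2) by linarith
  qed simp
  finally show ?thesis using n by linarith
qed

section \<open>The k-th prime\<close>

lemma kth_prime_spec:
  assumes "1 \<le> k" and "k \<le> prime_pi N"
  shows "prime (kth_prime k)" and "prime_pi (kth_prime k) = k" and "kth_prime k \<le> N"
proof -
  define m where "m = (LEAST m. k \<le> prime_pi m)"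
  have m: "k \<le> prime_pi m" "m \<le> N"
    unfolding m_def using assms(2) by (auto intro: LeastI Least_le)
  then obtain m' where m': "m = Suc m'" using assms(1) by (cases m) auto
  then have "\<not> k \<le> prime_pi m'" unfolding m_def by (intro not_less_Least) (simp add: m_def)
  then have m_spec: "prime m \<and> prime_pi m = k"
    using m(1) prime_pi_Suc[of m'] m' by (auto split: if_splits)
  have kth: "kth_prime k = (LEAST p. prime p \<and> prime_pi p = k)"
    unfolding kth_prime_def prime_pi_def using assms(1) by simp
  have "prime (kth_prime k) \<and> prime_pi (kth_prime k) = k"
    unfolding kth by (rule LeastI[of _ m]) (rule m_spec)
  moreover have "kth_prime k \<le> m"
    unfolding kth by (rule Least_le) (rule m_spec)
  ultimately show "prime (kth_prime k)" "prime_pi (kth_prime k) = k" "kth_prime k \<le> N" using m by auto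
qed

(* For M about 8 k log y, Chebyshev's bound gives prime_pi M >= M / (8 log M) >= k. *)
lemma kth_prime_le_mult_ln:
  assumes k: "1 \<le> k" and y: "2 \<le> y" and le: "k \<le> prime_pi (nat \<lfloor>y\<rfloor>)"
  shows "real (kth_prime k) \<le> 10 * real k * ln y"
proof -
  define M where "M = max 4 (nat \<lceil>8 * real k * ln y\<rceil>)"
  have "1/2 \<le> ln y" using ln_two_ge_half ln_mono[of 2 y] y by linarith
  then have "1/2 \<le> real k * ln y" using k mult_mono[of 1 "real k" "1/2" "ln y"] by simp
  then have M: "real M \<le> 10 * real k * ln y" "8 * real k * ln y \<le> real M" "4 \<le> real M"
    unfolding M_def by linarith+
  have "kth_prime k \<le> M"
  proof (cases "nat \<lfloor>y\<rfloor> \<le> M")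
    case True
    then show ?thesis using kth_prime_spec(3)[OF k le] by simp
  next
    case False
    then have "ln (real M) \<le> ln y" using M(3) by (intro ln_mono) linarith+
    then have "real M / 8 \<le> real (prime_pi M) * ln y"
      using psi_lower_bound[OF M(3)] psi_le_prime_pi_mult_ln[of "real M"]
      by (smt (verit) floor_of_nat mult_left_mono nat_int of_nat_0_le_iff)
    then have "real k * ln y \<le> real (prime_pi M) * ln y" using M(2) by linarith
    then have "real k \<le> real (prime_pi M)" using \<open>1/2 \<le> ln y\<close> by (simp add: mult_le_cancel_right)
    then show ?thesis using kth_prime_spec(3)[OF k] by simp
  qed
  then show ?thesis using M(1) by linarith
qed

lemma omega_le_prime_pi:
  assumes "\<forall>p\<in>prime_factors q. real p \<le> y"
  shows "omega q \<le> prime_pi (nat \<lfloor>y\<rfloor>)"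
  unfolding omega_def prime_pi_def primes_le_real_eq[symmetric]
  using assms by (intro card_mono) auto

lemma z_q_bounds:
  assumes y: "2 \<le> y" and smooth: "\<forall>p\<in>prime_factors q. real p \<le> y"
  shows "2 \<le> z_q q" and "real (z_q q) \<le> y" and "omega q \<le> z_q q"
proof -
  have "2 \<le> z_q q \<and> real (z_q q) \<le> y \<and> omega q \<le> z_q q"
  proof (cases "omega q = 0")
    case True
    then show ?thesis using y by (simp add: z_q_def kth_prime_def)
  next
    case False
    then have k: "1 \<le> omega q" by simp
    note spec = kth_prime_spec[OF k omega_le_prime_pi[OF smooth]]
    have "omega q \<le> z_q q" using spec(2) prime_pi_le[of "z_q q"] by (simp add: z_q_def)
    moreover have "real (z_q q) \<le> y" using spec(3) y by (simp add: z_q_def) linarith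
    ultimately show ?thesis using spec(1) prime_ge_2_nat by (simp add: z_q_def)
  qed
  then show "2 \<le> z_q q" "real (z_q q) \<le> y" "omega q \<le> z_q q" by auto
qed

lemma ln_le_two_sqrt:
  fixes x :: real
  assumes "0 < x"
  shows "ln x \<le> 2 * sqrt x"
proof -
  have "ln (sqrt x) < sqrt x" using assms by (intro ln_less_self) simp
  then show ?thesis using assms by (simp add: ln_sqrt)
qed

lemma one_le_ln:
  fixes x :: real
  assumes "4 \<le> x"
  shows "1 \<le> ln x"
proof -
  have "1 \<le> ln (2 * 2 :: real)" using ln_two_ge_half by (simp only: ln_mult) simp
  also have "\<dots> \<le> ln x" using assms by (intro ln_mono) auto
  finally show ?thesis .
qed

lemma add_ln_div_antimono:
  fixes a b c :: real
  assumes a: "0 < a" and "1 \<le> ln a" and "a \<le> b" and "0 \<le> c"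
  shows "(c + ln b) / b \<le> (c + ln a) / a"
proof -
  have b: "0 < b" using assms(1,3) by linarith
  have "ln b - ln a \<le> b / a - 1"
    using ln_le_minus_one[of "b / a"] a b by (simp add: ln_div)
  then have "a * (ln b - ln a) \<le> b - a" using a by (simp add: field_simps)
  also have "\<dots> \<le> (b - a) * ln a" using assms(2,3) mult_left_mono[of 1 "ln a" "b - a"] by simp
  finally have "a * ln b \<le> b * ln a" by (simp add: algebra_simps)
  moreover have "c * a \<le> c * b" using assms(3,4) by (intro mult_left_mono)
  ultimately have "a * (c + ln b) \<le> b * (c + ln a)" by (simp add: algebra_simps)
  then show ?thesis using a b by (simp add: divide_simps mult.commute)
qed

lemma add_ln_div_mult_ln_le:
  fixes c l :: real
  assumes "1 \<le> l" and "0 \<le> c"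
  shows "(c + ln l) / l * ln l \<le> c + 4"
proof -
  have "ln l \<le> l" using assms(1) ln_le_minus_one[of l] by simp
  then have "ln l / l \<le> 1" using assms(1) by simp
  then have "c * (ln l / l) \<le> c" using assms(2) by (rule mult_left_le)
  moreover have "(ln l)^2 \<le> (2 * sqrt l)^2"
    using assms(1) ln_le_two_sqrt[of l] by (intro power_mono) auto
  then have "(ln l)^2 / l \<le> 4" using assms(1) by (simp add: power_mult_distrib divide_le_eq)
  moreover have "(c + ln l) / l * ln l = c * (ln l / l) + (ln l)^2 / l"
    by (simp add: distrib_right add_divide_distrib power2_eq_square)
  ultimately show ?thesis by linarith
qed

lemma le_of_le_sq_mult_ln:
  fixes y c :: real
  assumes "1 \<le> y" and "0 \<le> c" and "y \<le> (c * ln y)^2"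
  shows "y \<le> 256 * c^4"
proof -
  have "ln y = 2 * ln (sqrt y)" using assms(1) by (simp add: ln_sqrt)
  also have "\<dots> \<le> 4 * sqrt (sqrt y)" using ln_le_two_sqrt[of "sqrt y"] assms(1) by simp
  finally have "ln y \<le> 4 * sqrt (sqrt y)" .
  moreover have "0 \<le> ln y" using assms(1) by simp
  ultimately have "(c * ln y)^2 \<le> (c * (4 * sqrt (sqrt y)))^2"
    using assms(2) by (intro power_mono mult_left_mono) auto
  also have "\<dots> = 16 * c^2 * sqrt y" using assms(1) by (simp add: power_mult_distrib)
  finally have "sqrt y * sqrt y \<le> 16 * c^2 * sqrt y" using assms by simp
  then have "sqrt y \<le> 16 * c^2" by (rule mult_right_le_imp_le) (use assms(1) in simp)
  then have "(sqrt y)^2 \<le> (16 * c^2)^2" using assms(1) by (intro power_mono) auto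
  then show ?thesis using assms(1) by (simp add: power_mult_distrib)
qed

lemma powr_le_one_add:
  fixes a t :: real
  assumes "0 \<le> a" and "0 \<le> t" and "t \<le> 1"
  shows "a powr t \<le> 1 + a"
proof (cases "1 \<le> a")
  case True
  then have "a powr t \<le> a powr 1" using assms by (intro powr_mono) auto
  then show ?thesis using True by simp
next
  case False
  then show ?thesis using assms powr_le1[of t a] by simp
qed

lemma le_4_mult_of_le_2_mult_add_2_ln:
  fixes l t :: real
  assumes "1 \<le> l" and "16 \<le> t" and "l \<le> 2 * t + 2 * ln l"
  shows "l \<le> 4 * t"
proof (cases "l \<le> 64")
  case False
  then have "8 \<le> sqrt l" by (simp add: real_le_rsqrt)
  then have "8 * sqrt l \<le> l" using assms(1) mult_right_mono[of 8 "sqrt l" "sqrt l"] by simp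
  then show ?thesis using ln_le_two_sqrt[of l] assms by linarith
qed (use assms in simp)

lemma mult_ln_le_quarter:
  fixes \<epsilon> t :: real
  assumes "0 \<le> \<epsilon>" and "(4 + 8 * \<epsilon>)^2 \<le> t"
  shows "(1/2 + \<epsilon>) * ln t \<le> t / 4"
proof -
  have "4 + 8 * \<epsilon> \<le> sqrt t" using assms by (simp add: real_le_rsqrt)
  moreover have t: "0 < t" using assms by (smt (verit) zero_less_power)
  ultimately have "(1 + 2 * \<epsilon>) * sqrt t \<le> sqrt t / 4 * sqrt t"
    by (intro mult_right_mono) auto
  moreover have "(1/2 + \<epsilon>) * ln t \<le> (1/2 + \<epsilon>) * (2 * sqrt t)"
    using assms(1) ln_le_two_sqrt[OF t] by (intro mult_left_mono) auto
  ultimately show ?thesis using t by (simp add: algebra_simps)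
qed

definition rate :: "real \<Rightarrow> real \<Rightarrow> real" where
  "rate \<epsilon> u = sqrt u / ln (2 * u) powr (1/2 + \<epsilon>)"

lemma rate_nonneg: "0 \<le> u \<Longrightarrow> 0 \<le> rate \<epsilon> u"
  unfolding rate_def by simp

lemma exp_mult_rate_mono: "a \<le> b \<Longrightarrow> 0 \<le> u \<Longrightarrow> exp a * rate \<epsilon> u \<le> exp b * rate \<epsilon> u"
  by (intro mult_right_mono rate_nonneg) auto

lemma le_mult_ln_powr_mult_rate:
  fixes B \<epsilon> u U :: real
  assumes "0 \<le> B" and "0 \<le> \<epsilon>" and "1 \<le> u" and "u \<le> U"
  shows "B \<le> B * ln (2 * U) powr (1/2 + \<epsilon>) * rate \<epsilon> u"
proof -
  have "ln (2 * u) powr (1/2 + \<epsilon>) \<le> ln (2 * U) powr (1/2 + \<epsilon>)"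
    using assms by (intro powr_mono2) auto
  also have "\<dots> \<le> ln (2 * U) powr (1/2 + \<epsilon>) * sqrt u"
    using mult_left_mono[of 1 "sqrt u" "ln (2 * U) powr (1/2 + \<epsilon>)"] assms(3) by simp
  finally have "1 \<le> ln (2 * U) powr (1/2 + \<epsilon>) * rate \<epsilon> u"
    using assms(3) by (simp add: rate_def le_divide_eq)
  then show ?thesis using mult_left_mono[of 1 _ B] assms(1) by (simp add: mult.assoc)
qed

lemma le_exp_mult_rate:
  fixes \<epsilon> c u X :: real
  assumes "0 \<le> \<epsilon>" and "2 \<le> u" and "0 < X"
    and ln_X: "ln X \<le> c + ln u / 2 - (1/2 + \<epsilon>) * ln (ln u)"
  shows "X \<le> exp (c + 1/2 + \<epsilon>) * rate \<epsilon> u"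
proof -
  have "0 < ln u" using assms(2) by simp
  have "ln (2 * u) \<le> 2 * ln u"
    using assms(2) ln_mono[of "2 * u" "u * u"] by (simp add: ln_mult mult_right_mono)
  then have "ln (ln (2 * u)) \<le> ln (2 * ln u)" using assms(2) by (intro ln_mono) auto
  also have "\<dots> = ln 2 + ln (ln u)" using \<open>0 < ln u\<close> by (simp add: ln_mult)
  finally have "ln (ln (2 * u)) \<le> ln 2 + ln (ln u)" .
  then have "(1/2 + \<epsilon>) * ln (ln (2 * u)) \<le> (1/2 + \<epsilon>) * (1 + ln (ln u))"
    using assms(1) ln_2_less_1 by (intro mult_left_mono) auto
  then have "(1/2 + \<epsilon>) * ln (ln (2 * u)) \<le> (1/2 + \<epsilon>) + (1/2 + \<epsilon>) * ln (ln u)"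
    by (simp add: distrib_left)
  then have "ln X \<le> c + 1/2 + \<epsilon> + ln u / 2 - (1/2 + \<epsilon>) * ln (ln (2 * u))"
    using ln_X by linarith
  also have "\<dots> = ln (exp (c + 1/2 + \<epsilon>) * rate \<epsilon> u)"
    using assms(2) ln_gt_zero[of "2 * u"] by (simp add: rate_def ln_mult ln_div ln_sqrt ln_powr)
  finally show ?thesis using assms(2,3) by (simp add: rate_def)
qed

locale smooth_setting =
  fixes x y :: real and q :: nat
  assumes y_ge_2: "2 \<le> y" and y_le_x: "y \<le> x" and psi_gt: "2 * ln x < psi y"
    and smooth: "\<forall>p\<in>prime_factors q. real p \<le> y"
begin

abbreviation u where "u \<equiv> u_of x y"
abbreviation \<theta> where "\<theta> \<equiv> theta_q y q"

lemma ln_y_pos: "0 < ln y"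
  using y_ge_2 by simp

lemma ln_x_eq: "ln x = u * ln y"
  using ln_y_pos by (simp add: u_of_def)

lemma u_ge_1: "1 \<le> u"
  using y_ge_2 y_le_x ln_y_pos by (simp add: u_of_def)

lemma ln_2u_le_u: "ln (2 * u) \<le> u"
  using ln_le_minus_one[of u] ln_2_less_1 u_ge_1 by (simp add: ln_mult)

lemma two_u_lt_y: "2 * u < y"
proof -
  have "2 * (u * ln y) < y * ln y"
    using psi_gt psi_le_mult_ln[of y] y_ge_2 unfolding ln_x_eq by linarith
  then have "(2 * u) * ln y < y * ln y" by (simp only: mult.assoc)
  then show ?thesis by (rule mult_right_less_imp_less) (use ln_y_pos in simp)
qed

lemma omega_le_y: "real (omega q) \<le> y"
  using omega_le_prime_pi[OF smooth] prime_pi_le[of "nat \<lfloor>y\<rfloor>"] y_ge_2 by linarith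

lemma theta_mult_ln_y: "\<theta> * ln y = ln (real (z_q q))"
  using ln_y_pos by (simp add: theta_q_def)

lemma theta_pos: "0 < \<theta>"
  using z_q_bounds(1)[OF y_ge_2 smooth] ln_y_pos by (simp add: theta_q_def)

lemma theta_le_1: "\<theta> \<le> 1"
  using z_q_bounds(1,2)[OF y_ge_2 smooth] ln_y_pos by (simp add: theta_q_def)

lemma ln_omega_le: "1 \<le> omega q \<Longrightarrow> ln (real (omega q)) \<le> \<theta> * ln y"
  unfolding theta_mult_ln_y using z_q_bounds(3)[OF y_ge_2 smooth] by simp

lemma D_le_omega: "D x y q \<le> real (omega q)"
  by (simp add: D_def)

lemma D_le_Delta: "D x y q \<le> Delta x y q"
  by (simp add: D_def)

lemma Delta_eq_of_le_sq:
  "y \<le> (ln x)^2 \<Longrightarrow> Delta x y q = ln x powr \<theta> / ln y * (1 + 1 / (\<theta> * ln (1 + eta x y)))"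
  using psi_gt by (simp add: Delta_def Let_def)

lemma Delta_le_of_gt_sq:
  assumes "(ln x)^2 < y"
  shows "Delta x y q \<le> (u * ln (2 * u)) powr \<theta> / ln (2 * u)"
proof -
  have b: "0 < ln (2 * u)" using u_ge_1 by simp
  have "0 < \<theta> * ln (2 * u)" using b theta_pos by simp
  then have "\<theta> / (1 + \<theta> * ln (2 * u)) \<le> 1 / ln (2 * u)"
    using b by (simp add: divide_simps)
  then have "\<theta> / (1 + \<theta> * ln (2 * u)) * (u * ln (2 * u)) powr \<theta>
      \<le> 1 / ln (2 * u) * (u * ln (2 * u)) powr \<theta>"
    by (rule mult_right_mono) simp
  then show ?thesis using assms by (simp add: Delta_def Let_def)
qed

lemma D_le_of_u_le:
  assumes "u \<le> U"
  shows "D x y q \<le> 256 * U^4 + 2 * U^2 + 2"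
proof (cases "y \<le> (ln x)^2")
  case True
  moreover have "(u * ln y)^2 \<le> (U * ln y)^2"
    using assms u_ge_1 ln_y_pos by (intro power_mono mult_right_mono) auto
  ultimately have "y \<le> (U * ln y)^2" unfolding ln_x_eq by linarith
  then have "y \<le> 256 * U^4" using y_ge_2 assms u_ge_1 by (intro le_of_le_sq_mult_ln) auto
  then show ?thesis using D_le_omega omega_le_y by (smt (verit) zero_le_power2)
next
  case False
  then have "D x y q \<le> (u * ln (2 * u)) powr \<theta> / ln (2 * u)"
    using D_le_Delta Delta_le_of_gt_sq by (meson not_le order_trans)
  have "u * ln (2 * u) \<le> U^2"
    using assms u_ge_1 ln_2u_le_u mult_mono[of u U "ln (2 * u)" U] by (simp add: power2_eq_square)
  moreover have "(u * ln (2 * u)) powr \<theta> \<le> 1 + u * ln (2 * u)"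
    using theta_pos theta_le_1 u_ge_1 by (intro powr_le_one_add) auto
  moreover have "1/2 \<le> ln (2 * u)" using ln_two_ge_half u_ge_1 by (smt (verit) ln_mono mult_le_cancel_left1)
  then have "1 + U^2 \<le> (2 + 2 * U^2) * ln (2 * u)"
    using mult_left_mono[of "1/2" "ln (2 * u)" "(2 + 2 * U^2)"] by simp
  ultimately have "(u * ln (2 * u)) powr \<theta> \<le> (2 + 2 * U^2) * ln (2 * u)" by linarith
  then have "(u * ln (2 * u)) powr \<theta> / ln (2 * u) \<le> (2 + 2 * U^2)"
    using \<open>1/2 \<le> ln (2 * u)\<close> by (simp add: pos_divide_le_eq)
  moreover have "0 \<le> U^4" using assms u_ge_1 by simp
  ultimately show ?thesis using \<open>D x y q \<le> (u * ln (2 * u)) powr \<theta> / ln (2 * u)\<close> by linarith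
qed

lemma theta_le:
  assumes "0 < C" and "1 \<le> omega q" and "real (omega q) \<le> C * y powr a"
  shows "\<theta> \<le> a + (ln (10 * C) + ln (ln y)) / ln y"
proof -
  have "10 * real (omega q) * ln y \<le> 10 * (C * y powr a) * ln y"
    using assms(3) ln_y_pos by (intro mult_right_mono) auto
  then have "real (z_q q) \<le> 10 * C * y powr a * ln y"
    using kth_prime_le_mult_ln[OF assms(2) y_ge_2 omega_le_prime_pi[OF smooth]]
    by (simp add: z_q_def mult.assoc)
  then have "ln (real (z_q q)) \<le> ln (10 * C * y powr a * ln y)"
    using z_q_bounds(1)[OF y_ge_2 smooth] by (intro ln_mono) auto
  also have "\<dots> = ln (10 * C) + a * ln y + ln (ln y)"
    using assms(1) y_ge_2 ln_y_pos by (simp add: ln_mult ln_powr)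
  finally have "\<theta> * ln y \<le> a * ln y + (ln (10 * C) + ln (ln y))"
    unfolding theta_mult_ln_y by simp
  then show ?thesis using ln_y_pos by (simp add: field_simps)
qed

end

locale large_u_setting = smooth_setting +
  fixes \<epsilon> :: real
  assumes eps_nonneg: "0 \<le> \<epsilon>" and ln_u_large: "(4 + 8 * \<epsilon>)^2 \<le> ln (u_of x y)"
begin

abbreviation \<alpha> where "\<alpha> \<equiv> 1/2 - (1 + \<epsilon>) * ln (ln u) / ln u"

lemma ln_u_ge_16: "16 \<le> ln u"
proof -
  have "(4::real)^2 \<le> (4 + 8 * \<epsilon>)^2" using eps_nonneg by (intro power_mono) auto
  then show ?thesis using ln_u_large by simp
qed

lemma u_ge_2: "2 \<le> u"
proof (rule ccontr)
  assume "\<not> 2 \<le> u"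
  then have "ln u \<le> ln 2" using u_ge_1 by (intro ln_mono) auto
  then show False using ln_u_ge_16 ln_2_less_1 by simp
qed

lemma ln_u_le_ln_y: "ln u \<le> ln y"
  using two_u_lt_y u_ge_1 by (intro ln_mono) auto

lemma alpha_mult_ln_u: "\<alpha> * ln u = ln u / 2 - ln (ln u) - \<epsilon> * ln (ln u)"
  using ln_u_ge_16 by (simp add: field_simps)

lemma alpha_le_half: "\<alpha> \<le> 1/2"
  using ln_u_ge_16 eps_nonneg by simp

lemma ln_ln_u_le: "(1/2 + \<epsilon>) * ln (ln u) \<le> ln u / 4"
  using mult_ln_le_quarter[OF eps_nonneg ln_u_large] .

lemma ln_y_le_4_ln_u:
  assumes "y \<le> (ln x)^2"
  shows "ln y \<le> 4 * ln u"
proof -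
  have ln_x: "0 < ln x" using ln_x_eq u_ge_1 ln_y_pos by simp
  have "ln y \<le> ln ((ln x)^2)" using assms y_ge_2 by (intro ln_mono) auto
  also have "\<dots> = 2 * ln u + 2 * ln (ln y)"
    using ln_x u_ge_1 ln_y_pos by (simp add: ln_realpow ln_x_eq ln_mult)
  finally show ?thesis
    using ln_u_ge_16 ln_u_le_ln_y by (intro le_4_mult_of_le_2_mult_add_2_ln) auto
qed

lemma two_ln_u_le_ln_y:
  assumes "(ln x)^2 < y"
  shows "2 * ln u \<le> ln y"
proof -
  have ln_x: "0 < ln x" using ln_x_eq u_ge_1 ln_y_pos by simp
  then have "ln ((ln x)^2) < ln y" using assms y_ge_2 by (subst ln_less_cancel_iff) auto
  then have "2 * ln (ln x) < ln y" using ln_x by (simp add: ln_realpow)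
  moreover have "ln (ln x) = ln u + ln (ln y)" using u_ge_1 ln_y_pos by (simp add: ln_x_eq ln_mult)
  moreover have "0 \<le> ln (ln y)" using ln_u_ge_16 ln_u_le_ln_y by simp
  ultimately show ?thesis by linarith
qed

lemma ln_y_le_of_small_psi:
  assumes "psi y < 5 * ln x"
  shows "ln y \<le> 6 + ln u + ln (ln y)"
proof -
  have "4 \<le> y" using two_u_lt_y u_ge_2 by simp
  then have "y \<le> 40 * (u * ln y)" using psi_lower_bound[of y] assms by (simp add: ln_x_eq)
  moreover have "0 \<le> u * ln y" using ln_y_pos u_ge_1 by simp
  ultimately have "y \<le> 2^6 * (u * ln y)" by simp
  then have "ln y \<le> ln (2^6 * (u * ln y))" using y_ge_2 by (intro ln_mono) auto
  also have "\<dots> = 6 * ln 2 + ln u + ln (ln y)"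
    using u_ge_1 ln_y_pos ln_realpow[of 2 6] by (simp add: ln_mult)
  finally show ?thesis using ln_2_less_1 by linarith
qed

lemma ln_ln_y_le:
  assumes "y \<le> (ln x)^2"
  shows "ln (ln y) \<le> 2 + ln (ln u)"
proof -
  have "ln (ln y) \<le> ln (4 * ln u)"
    using ln_y_le_4_ln_u[OF assms] ln_y_pos by (intro ln_mono) auto
  also have "\<dots> = 2 * ln 2 + ln (ln u)"
    using ln_u_ge_16 ln_mult[of 2 2] by (simp add: ln_mult)
  finally show ?thesis using ln_2_less_1 by linarith
qed

lemma Delta_le_of_gt_sq_large_u:
  assumes gt: "(ln x)^2 < y" and c: "0 \<le> c" and theta: "\<theta> \<le> \<alpha> + (c + ln (ln y)) / ln y"
  shows "Delta x y q \<le> exp (c + 1 + 1/2 + \<epsilon>) * rate \<epsilon> u"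
proof -
  define t b a where "t = ln u" and "b = ln (2 * u)" and "a = \<alpha>"
  define g where "g = (c + ln (2 * t)) / (2 * t)"
  have t: "16 \<le> t" using ln_u_ge_16 by (simp add: t_def)
  have "t \<le> b" using u_ge_2 by (simp add: t_def b_def)
  moreover have "b \<le> u" using ln_2u_le_u by (simp add: b_def)
  ultimately have b: "t \<le> b" "ln t \<le> ln b" "ln b \<le> t"
    using t by (auto simp: t_def intro!: ln_mono)
  have "(c + ln (ln y)) / ln y \<le> g"
    unfolding g_def using c t two_ln_u_le_ln_y[OF gt]
    by (intro add_ln_div_antimono one_le_ln) (auto simp: t_def)
  then have theta': "\<theta> \<le> a + g" using theta by (simp add: a_def)
  have "a \<le> 1/2" using alpha_le_half by (simp add: a_def)
  have g: "0 \<le> g" "g * (2 * t) = c + ln 2 + ln t"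
    using c t by (auto simp: g_def ln_mult)
  have "\<theta> * (t + ln b) \<le> (a + g) * (t + ln b)"
    using theta' t b by (intro mult_right_mono) auto
  moreover have "a * ln b \<le> ln b / 2"
    using mult_right_mono[OF \<open>a \<le> 1/2\<close>, of "ln b"] b t by simp
  moreover have "g * ln b \<le> g * t" using g b by (intro mult_left_mono)
  moreover have "a * t = t / 2 - ln t - \<epsilon> * ln t" using alpha_mult_ln_u by (simp add: a_def t_def)
  ultimately have "\<theta> * (t + ln b) - ln b \<le> c + 1 + t / 2 - ln t / 2 - \<epsilon> * ln t"
    using g b ln_2_less_1 by (simp add: algebra_simps)
  moreover have "ln ((u * b) powr \<theta> / b) = \<theta> * (t + ln b) - ln b"
    using u_ge_2 b t by (simp add: t_def ln_div ln_powr ln_mult)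
  ultimately have "(u * b) powr \<theta> / b \<le> exp (c + 1 + 1/2 + \<epsilon>) * rate \<epsilon> u"
    using eps_nonneg u_ge_2 b t by (intro le_exp_mult_rate) (auto simp: t_def algebra_simps)
  then show ?thesis using Delta_le_of_gt_sq[OF gt] by (simp add: b_def)
qed

lemma Delta_le_of_le_sq_large_psi:
  assumes le: "y \<le> (ln x)^2" and psi: "5 * ln x \<le> psi y" and theta_ge: "ln u / 4 \<le> \<theta> * ln y"
  shows "Delta x y q \<le> 5 * ln x powr \<theta> / ln u"
proof -
  have t: "0 < ln u" using ln_u_ge_16 by simp
  have ln_x: "0 < ln x" using ln_x_eq u_ge_1 ln_y_pos by simp
  then have "4 \<le> 1 + eta x y" using psi by (simp add: eta_def field_simps)
  then have "\<theta> \<le> \<theta> * ln (1 + eta x y)" using one_le_ln theta_pos by simp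
  then have "1 + 1 / (\<theta> * ln (1 + eta x y)) \<le> 1 + 1 / \<theta>"
    using theta_pos by (simp add: divide_left_mono)
  then have "Delta x y q \<le> ln x powr \<theta> / ln y * (1 + 1 / \<theta>)"
    unfolding Delta_eq_of_le_sq[OF le] using ln_y_pos by (intro mult_left_mono) auto
  also have "\<dots> = ln x powr \<theta> * (1 / ln y + 1 / (\<theta> * ln y))"
    using theta_pos ln_y_pos by (simp add: field_simps)
  also have "\<dots> \<le> ln x powr \<theta> * (1 / ln u + 4 / ln u)"
  proof (intro mult_left_mono add_mono)
    show "1 / ln y \<le> 1 / ln u" using t ln_u_le_ln_y by (intro divide_left_mono) auto
    show "1 / (\<theta> * ln y) \<le> 4 / ln u"
      using t theta_ge by (simp add: divide_simps)
  qed simp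
  finally show ?thesis by (simp add: mult.commute)
qed

lemma Delta_le_of_le_sq_large_u:
  assumes le: "y \<le> (ln x)^2" and psi: "5 * ln x \<le> psi y" and c: "0 \<le> c"
    and theta: "\<theta> \<le> \<alpha> + (c + ln (ln y)) / ln y" and theta_ge: "ln u / 4 \<le> \<theta> * ln y"
  shows "Delta x y q \<le> exp (2 * c + 11 + 1/2 + \<epsilon>) * rate \<epsilon> u"
proof -
  define t l a g where "t = ln u" and "l = ln y" and "a = \<alpha>" and "g = (c + ln l) / l"
  have t: "16 \<le> t" "t \<le> l"
    using ln_u_ge_16 ln_u_le_ln_y by (simp_all add: t_def l_def)
  have ln_l: "0 \<le> ln l" "ln l \<le> 2 + ln t"
    using t ln_ln_y_le[OF le] by (simp_all add: t_def l_def)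
  have theta': "\<theta> \<le> a + g" using theta by (simp add: a_def g_def l_def)
  have "a \<le> 1/2" using alpha_le_half by (simp add: a_def)
  have g: "0 \<le> g" "g * l = c + ln l" "g * ln l \<le> c + 4"
    using c t ln_l add_ln_div_mult_ln_le[of l c] by (auto simp: g_def)
  have "\<theta> * (t + ln l) \<le> (a + g) * (t + ln l)"
    using theta' t ln_l by (intro mult_right_mono) auto
  moreover have "a * ln l \<le> ln l / 2"
    using mult_right_mono[OF \<open>a \<le> 1/2\<close> ln_l(1)] by simp
  moreover have "g * t \<le> g * l" using g t by (intro mult_left_mono)
  moreover have "a * t = t / 2 - ln t - \<epsilon> * ln t" using alpha_mult_ln_u by (simp add: a_def t_def)
  moreover have "ln (5::real) \<le> 4" using ln_le_minus_one[of 5] by simp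
  ultimately have "\<theta> * (t + ln l) + ln 5 - ln t \<le> 2 * c + 11 + t / 2 - ln t / 2 - \<epsilon> * ln t"
    using g ln_l by (simp add: algebra_simps)
  moreover have "ln (5 * ln x powr \<theta> / t) = \<theta> * (t + ln l) + ln 5 - ln t"
    using u_ge_2 ln_y_pos t by (simp add: t_def l_def ln_x_eq ln_div ln_mult ln_powr)
  ultimately have "5 * ln x powr \<theta> / t \<le> exp (2 * c + 11 + 1/2 + \<epsilon>) * rate \<epsilon> u"
    using eps_nonneg u_ge_2 t u_ge_1 ln_y_pos
    by (intro le_exp_mult_rate) (auto simp: t_def ln_x_eq algebra_simps)
  then show ?thesis using Delta_le_of_le_sq_large_psi[OF le psi theta_ge] by (simp add: t_def)
qed

lemma omega_le_of_small_psi_large_u: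
  assumes le: "y \<le> (ln x)^2" and psi: "psi y < 5 * ln x" and C: "0 < C"
    and omega: "1 \<le> omega q" and bound: "real (omega q) \<le> C * y powr \<alpha>"
  shows "real (omega q) \<le> exp (ln C + 5 + 1/2 + \<epsilon>) * rate \<epsilon> u"
proof -
  define t l a where "t = ln u" and "l = ln y" and "a = \<alpha>"
  have t: "16 \<le> t" "t \<le> l"
    using ln_u_ge_16 ln_u_le_ln_y by (simp_all add: t_def l_def)
  have ln_l: "0 \<le> ln l" "ln l \<le> 2 + ln t"
    using t ln_ln_y_le[OF le] by (simp_all add: t_def l_def)
  have l: "l \<le> 6 + t + ln l" using ln_y_le_of_small_psi[OF psi] by (simp add: t_def l_def)
  have "a * l \<le> 5 + t / 2 - ln t / 2 - \<epsilon> * ln t"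
  proof (cases "0 \<le> a")
    case True
    have "a \<le> 1/2" using alpha_le_half by (simp add: a_def)
    then have "a * 6 \<le> 3" "a * ln l \<le> ln l / 2"
      using mult_right_mono[of a "1/2" "ln l"] ln_l by simp_all
    moreover have "a * l \<le> a * (6 + t + ln l)" using True l by (intro mult_left_mono)
    moreover have "a * t = t / 2 - ln t - \<epsilon> * ln t" using alpha_mult_ln_u by (simp add: a_def t_def)
    ultimately show ?thesis using ln_l by (simp add: algebra_simps)
  next
    case False
    then have "a * l \<le> 0" using t by (simp add: mult_nonpos_nonneg)
    moreover have "ln t / 2 + \<epsilon> * ln t \<le> t / 4" using ln_ln_u_le by (simp add: t_def algebra_simps)
    ultimately show ?thesis using t by linarith
  qed
  moreover have "ln (real (omega q)) \<le> ln C + a * l"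
  proof -
    have "ln (real (omega q)) \<le> ln (C * y powr a)" using omega bound by (intro ln_mono) (auto simp: a_def)
    also have "\<dots> = ln C + a * l" using C y_ge_2 by (simp add: l_def ln_mult ln_powr)
    finally show ?thesis .
  qed
  ultimately show ?thesis
    using eps_nonneg u_ge_2 omega by (intro le_exp_mult_rate) (auto simp: t_def algebra_simps)
qed

lemma D_le_of_many_factors:
  assumes C: "0 < C" and omega: "1 \<le> omega q" and bound: "real (omega q) \<le> C * y powr \<alpha>"
    and theta_ge: "ln u / 4 \<le> \<theta> * ln y"
  shows "D x y q \<le> exp (2 * \<bar>ln (10 * C)\<bar> + 12 + \<epsilon>) * rate \<epsilon> u"
proof -
  define c where "c = \<bar>ln (10 * C)\<bar>"
  have "ln C \<le> ln (10 * C)" using C by (intro ln_mono) auto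
  then have c: "0 \<le> c" "ln C \<le> c" by (auto simp: c_def)
  have "\<theta> \<le> \<alpha> + (ln (10 * C) + ln (ln y)) / ln y"
    by (rule theta_le[OF C omega bound])
  also have "\<dots> \<le> \<alpha> + (c + ln (ln y)) / ln y"
    using ln_y_pos by (simp add: c_def divide_right_mono)
  finally have theta: "\<theta> \<le> \<alpha> + (c + ln (ln y)) / ln y" .
  have mono: "exp k * rate \<epsilon> u \<le> exp (2 * c + 12 + \<epsilon>) * rate \<epsilon> u"
    if "k \<le> 2 * c + 12 + \<epsilon>" for k
    using that u_ge_1 by (intro exp_mult_rate_mono) auto
  consider "(ln x)^2 < y" | "y \<le> (ln x)^2" "5 * ln x \<le> psi y" | "y \<le> (ln x)^2" "psi y < 5 * ln x"
    by linarith
  then have "D x y q \<le> exp (2 * c + 12 + \<epsilon>) * rate \<epsilon> u"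
  proof cases
    case 1
    then show ?thesis
      using D_le_Delta Delta_le_of_gt_sq_large_u[OF 1 c(1) theta] mono[of "c + 1 + 1/2 + \<epsilon>"] c
      by linarith
  next
    case 2
    then show ?thesis
      using D_le_Delta Delta_le_of_le_sq_large_u[OF 2 c(1) theta theta_ge]
        mono[of "2 * c + 11 + 1/2 + \<epsilon>"] c
      by linarith
  next
    case 3
    then show ?thesis
      using D_le_omega omega_le_of_small_psi_large_u[OF 3 C omega bound]
        mono[of "ln C + 5 + 1/2 + \<epsilon>"] c
      by linarith
  qed
  then show ?thesis by (simp add: c_def)
qed

lemma D_le_of_large_u:
  assumes C: "0 < C" and bound: "real (omega q) \<le> C * y powr \<alpha>"
  shows "D x y q \<le> exp (2 * \<bar>ln (10 * C)\<bar> + 12 + \<epsilon>) * rate \<epsilon> u"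
proof -
  have mono: "exp (0 + 1/2 + \<epsilon>) * rate \<epsilon> u \<le> exp (2 * \<bar>ln (10 * C)\<bar> + 12 + \<epsilon>) * rate \<epsilon> u"
    using u_ge_1 by (intro exp_mult_rate_mono) auto
  consider (no_factors) "omega q = 0"
    | (few_factors) "1 \<le> omega q" "ln (real (omega q)) \<le> ln u / 2 - (1/2 + \<epsilon>) * ln (ln u)"
    | (many_factors) "1 \<le> omega q" "ln u / 2 - (1/2 + \<epsilon>) * ln (ln u) < ln (real (omega q))"
    by linarith
  then show ?thesis
  proof cases
    case no_factors
    moreover have "0 \<le> exp (2 * \<bar>ln (10 * C)\<bar> + 12 + \<epsilon>) * rate \<epsilon> u"
      using u_ge_1 by (simp add: rate_nonneg)
    ultimately show ?thesis using D_le_omega by simp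
  next
    case few_factors
    then have "real (omega q) \<le> exp (0 + 1/2 + \<epsilon>) * rate \<epsilon> u"
      using eps_nonneg u_ge_2 by (intro le_exp_mult_rate) auto
    then show ?thesis using D_le_omega mono by linarith
  next
    case many_factors
    then have "ln u / 4 \<le> \<theta> * ln y" using ln_omega_le ln_ln_u_le by linarith
    then show ?thesis using D_le_of_many_factors[OF C many_factors(1) bound] by blast
  qed
qed

end

theorem mainTheorem6:
  fixes \<epsilon> C :: real
  assumes "\<epsilon> > 0" and "C > 0"
  shows "\<exists>K>0. \<forall>(x::real) (y::real) (q::nat).
     2 \<le> y \<and> y \<le> x \<and> psi y > 2 * ln x \<and> 1 \<le> q \<and>
     (\<forall>p\<in>prime_factors q. real p \<le> y) \<and>
     real (omega q) \<le> C * y powr (1/2 - (1 + \<epsilon>) * ln (ln (u_of x y)) / ln (u_of x y))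
     \<longrightarrow> D x y q \<le> K * sqrt (u_of x y) / (ln (2 * u_of x y)) powr (1/2 + \<epsilon>)"
proof -
  define U where "U = exp ((4 + 8 * \<epsilon>)^2)"
  define B where "B = (256 * U^4 + 2 * U^2 + 2) * ln (2 * U) powr (1/2 + \<epsilon>)"
  define K where "K = B + exp (2 * \<bar>ln (10 * C)\<bar> + 12 + \<epsilon>)"
  have U: "1 \<le> U" by (simp add: U_def)
  have "D x y q \<le> K * rate \<epsilon> (u_of x y)"
    if "2 \<le> y \<and> y \<le> x \<and> psi y > 2 * ln x \<and> 1 \<le> q \<and> (\<forall>p\<in>prime_factors q. real p \<le> y) \<and>
      real (omega q) \<le> C * y powr (1/2 - (1 + \<epsilon>) * ln (ln (u_of x y)) / ln (u_of x y))"
    for x y q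
  proof -
    interpret smooth_setting x y q using that by unfold_locales auto
    have "D x y q \<le> B * rate \<epsilon> u \<or> D x y q \<le> exp (2 * \<bar>ln (10 * C)\<bar> + 12 + \<epsilon>) * rate \<epsilon> u"
    proof (cases "u \<le> U")
      case True
      have "D x y q \<le> 256 * U^4 + 2 * U^2 + 2" by (rule D_le_of_u_le[OF True])
      also have "\<dots> \<le> B * rate \<epsilon> u"
        unfolding B_def using assms(1) u_ge_1 True by (intro le_mult_ln_powr_mult_rate) auto
      finally show ?thesis by simp
    next
      case False
      then have "ln U \<le> ln u" using U by (intro ln_mono) auto
      then interpret large_u_setting x y q \<epsilon> using that assms(1) by unfold_locales (auto simp: U_def)
      show ?thesis using D_le_of_large_u assms(2) that by blast
    qed
    moreover have "0 \<le> B" "0 \<le> rate \<epsilon> u" using U u_ge_1 rate_nonneg by (simp_all add: B_def)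
    ultimately show ?thesis by (smt (verit) K_def exp_gt_zero mult_right_mono)
  qed
  moreover have "0 < K" unfolding K_def B_def using U by (intro add_nonneg_pos) auto
  ultimately show ?thesis by (intro exI[of _ K]) (auto simp: rate_def)
qed

end
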